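(* Let $k\ge 1$, $n\ge 100k$ and $3\le r<s\le 10k$ be integers. Then \[ \lambda(T_{n-s+2,2}\circ K_{s-1})<\lambda(T_{n-r+2,2}\circ K_{r-1}). \]
   Context: $\lambda(G)$ denotes the spectral radius of the adjacency matrix of $G$. $T_{m,2}$ denotes the complete bipartite graph on $m$ vertices with parts of sizes $\lfloor m/2\rfloor$ and $\lceil m/2\rceil$. For $t\ge 3$, $T_{n-t+2,2}\circ K_{t-1}$ is the $n$-vertex graph obtained by identifying a vertex of the complete graph $K_{t-1}$ with a vertex of the smaller part (of size $\lfloor (n-t+2)/2\rfloor$) of $T_{n-t+2,2}$. *)

theory Defs
  imports "Jordan_Normal_Form.Spectral_Radius"
begin

definition adj_matrix :: "nat \<Rightarrow> (nat \<Rightarrow> nat \<Rightarrow> bool) \<Rightarrow> complex mat" where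
  "adj_matrix n E = mat n n (\<lambda>(i, j). if E i j then 1 else 0)"

definition graph_lambda :: "nat \<Rightarrow> (nat \<Rightarrow> nat \<Rightarrow> bool) \<Rightarrow> real" where
  "graph_lambda n E = spectral_radius (adj_matrix n E)"

text \<open>The graph T_{n-t+2,2} o K_{t-1} on vertices {0..<n}: with m = n-t+2 and
  a = floor(m/2), the smaller part is {0..<a}, the larger part is {a..<m};
  the clique K_{t-1} is on {0} \<union> {m..<n} (t-1 vertices), sharing vertex 0
  with the smaller part.\<close>

definition TK_edge :: "nat \<Rightarrow> nat \<Rightarrow> nat \<Rightarrow> nat \<Rightarrow> bool" where
  "TK_edge n t i j =
     (let m = n + 2 - t; a = m div 2; C = insert 0 {m..<n} in
      i < n \<and> j < n \<and> i \<noteq> j \<and>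
      ((i < a \<and> a \<le> j \<and> j < m) \<or> (j < a \<and> a \<le> i \<and> i < m) \<or> (i \<in> C \<and> j \<in> C)))"

end

theory Submission
  imports Defs
begin

text \<open>Put \<open>m = n - t + 2\<close>, \<open>a = \<lfloor>m/2\<rfloor>\<close>, \<open>b = \<lceil>m/2\<rceil>\<close>. If the clique is small compared with
  the bipartite part, \<open>\<lambda>\<close> of the graph lies in \<open>[\<surd>(ab), \<surd>(ab+1)]\<close>. Both bounds come from
  one family of test vectors, constant on the vertex classes and satisfying \<open>A v = \<mu> v\<close>
  everywhere except at the shared vertex. At \<open>\<mu> = \<surd>(ab+1)\<close> the vector is positive with
  \<open>A v \<le> \<mu> v\<close>, which bounds \<open>\<lambda>\<close> from above (Collatz--Wielandt). On \<open>[\<surd>(ab), \<surd>(ab+1)]\<close>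
  the defect at the shared vertex changes sign, and at a zero the test vector is an
  eigenvector. Finally \<open>ab = \<lfloor>m\<^sup>2/4\<rfloor>\<close>, and when \<open>t\<close> grows \<open>m\<close> drops by at least one, so \<open>ab\<close>
  drops by more than one once \<open>m \<ge> 4\<close>; hence the intervals for \<open>s\<close> and \<open>r\<close> are disjoint.\<close>

lemma mat_of_real_mult_vec_nth:
  fixes B :: "nat \<Rightarrow> nat \<Rightarrow> real"
  assumes "i < n" "v \<in> carrier_vec n"
  shows "(mat n n (\<lambda>(i, j). complex_of_real (B i j)) *\<^sub>v v) $ i = (\<Sum>j<n. of_real (B i j) * v $ j)"
  using assms by (auto simp: scalar_prod_def lessThan_atLeast0 intro!: sum.cong)

lemma spectral_radius_le_if_subinvariant:
  fixes B :: "nat \<Rightarrow> nat \<Rightarrow> real" and x :: "nat \<Rightarrow> real"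
  assumes "0 < n"
    and nonneg: "\<And>i j. i < n \<Longrightarrow> j < n \<Longrightarrow> 0 \<le> B i j"
    and pos: "\<And>i. i < n \<Longrightarrow> 0 < x i"
    and sub: "\<And>i. i < n \<Longrightarrow> (\<Sum>j<n. B i j * x j) \<le> c * x i"
  shows "spectral_radius (mat n n (\<lambda>(i, j). complex_of_real (B i j))) \<le> c"
proof -
  let ?A = "mat n n (\<lambda>(i, j). complex_of_real (B i j))"
  have A: "?A \<in> carrier_mat n n" by simp
  obtain \<mu> where "\<mu> \<in> spectrum ?A" and radius: "spectral_radius ?A = cmod \<mu>"
    using spectral_radius_mem_max(1)[OF A \<open>0 < n\<close>] by auto
  then obtain v where v: "v \<in> carrier_vec n" "v \<noteq> 0\<^sub>v n" "?A *\<^sub>v v = \<mu> \<cdot>\<^sub>v v"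
    unfolding spectrum_def eigenvalue_def eigenvector_def by auto
  define ratio where "ratio j = cmod (v $ j) / x j" for j
  have finite: "finite (ratio ` {..<n})" "ratio ` {..<n} \<noteq> {}"
    using \<open>0 < n\<close> by auto
  obtain i where i: "i < n" "ratio i = Max (ratio ` {..<n})"
    using Max_in[OF finite] by auto
  have ratio_max: "ratio j \<le> ratio i" if "j < n" for j
    using i finite that by simp
  obtain j0 where "j0 < n" "v $ j0 \<noteq> 0"
    using v(1,2) by (metis carrier_vecD eq_vecI index_zero_vec(1,2))
  then have "0 < ratio j0" using pos by (simp add: ratio_def)
  then have ratio_pos: "0 < ratio i" using ratio_max[OF \<open>j0 < n\<close>] by linarith
  have dominated: "cmod (v $ j) \<le> ratio i * x j" if "j < n" for j
    using ratio_max[OF that] pos[OF that] by (simp add: ratio_def divide_le_eq)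
  have "cmod \<mu> * cmod (v $ i) = cmod ((?A *\<^sub>v v) $ i)"
    using v i by (simp add: norm_mult)
  also have "\<dots> = cmod (\<Sum>j<n. of_real (B i j) * v $ j)"
    by (simp only: mat_of_real_mult_vec_nth[OF i(1) v(1)])
  also have "\<dots> \<le> (\<Sum>j<n. cmod (of_real (B i j) * v $ j))"
    by (rule norm_sum)
  also have "\<dots> = (\<Sum>j<n. B i j * cmod (v $ j))"
    using nonneg[OF i(1)] by (simp add: norm_mult)
  also have "\<dots> \<le> (\<Sum>j<n. B i j * (ratio i * x j))"
    using nonneg[OF i(1)] dominated by (intro sum_mono mult_left_mono) auto
  also have "\<dots> = ratio i * (\<Sum>j<n. B i j * x j)"
    by (simp add: sum_distrib_left algebra_simps)
  also have "\<dots> \<le> ratio i * (c * x i)"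
    using sub[OF i(1)] ratio_pos by simp
  also have "\<dots> = c * cmod (v $ i)"
    using pos[OF i(1)] by (simp add: ratio_def)
  finally have "cmod \<mu> * cmod (v $ i) \<le> c * cmod (v $ i)" .
  moreover have "0 < cmod (v $ i)"
    using ratio_pos by (auto simp: ratio_def)
  ultimately show ?thesis
    using radius by simp
qed

lemma abs_real_eigenvalue_le_spectral_radius:
  fixes B :: "nat \<Rightarrow> nat \<Rightarrow> real" and u :: "nat \<Rightarrow> real"
  assumes "p < n" "u p \<noteq> 0"
    and eigen: "\<And>i. i < n \<Longrightarrow> (\<Sum>j<n. B i j * u j) = \<mu> * u i"
  shows "\<bar>\<mu>\<bar> \<le> spectral_radius (mat n n (\<lambda>(i, j). complex_of_real (B i j)))"
proof -
  let ?A = "mat n n (\<lambda>(i, j). complex_of_real (B i j))"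
  define v where "v = vec n (\<lambda>j. complex_of_real (u j))"
  have "?A *\<^sub>v v = of_real \<mu> \<cdot>\<^sub>v v"
  proof (rule eq_vecI)
    fix i assume "i < dim_vec (of_real \<mu> \<cdot>\<^sub>v v)"
    then have "i < n" by (simp add: v_def)
    then have "(?A *\<^sub>v v) $ i = of_real (\<Sum>j<n. B i j * u j)"
      by (subst mat_of_real_mult_vec_nth) (auto simp: v_def)
    then show "(?A *\<^sub>v v) $ i = (of_real \<mu> \<cdot>\<^sub>v v) $ i"
      using eigen \<open>i < n\<close> by (simp add: v_def)
  qed (simp add: v_def)
  moreover have "v \<noteq> 0\<^sub>v n"
    using assms(1,2) by (metis index_vec index_zero_vec(1) of_real_eq_0_iff v_def)
  moreover have "v \<in> carrier_vec n"
    by (simp add: v_def)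
  ultimately have "of_real \<mu> \<in> spectrum ?A"
    unfolding spectrum_def eigenvalue_def eigenvector_def by auto
  then have "cmod (of_real \<mu>) \<in> cmod ` spectrum ?A"
    by blast
  then show ?thesis
    using spectral_radius_mem_max(2)[of ?A n] \<open>p < n\<close> by simp
qed

lemma adj_matrix_of_real:
  "adj_matrix n E = mat n n (\<lambda>(i, j). complex_of_real (if E i j then 1 else 0))"
  unfolding adj_matrix_def by (auto intro!: cong_mat)

locale TK_graph =
  fixes n t :: nat
  assumes three_le_t: "3 \<le> t" and t_le_n: "t \<le> n"
begin

definition m :: nat where "m = n + 2 - t"
definition a :: nat where "a = m div 2"
definition b :: nat where "b = m - a"

lemma part_bounds: "1 \<le> a" "a \<le> b" "b \<le> a + 1" "a < m" "m < n" "n - m = t - 2"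
proof -
  have "2 \<le> m" "m < n" "n - m = t - 2"
    using three_le_t t_le_n by (auto simp: m_def)
  moreover have "m = 2 * a + m mod 2" "m mod 2 \<le> 1"
    by (simp_all add: a_def)
  ultimately show "1 \<le> a" "a \<le> b" "b \<le> a + 1" "a < m" "m < n" "n - m = t - 2"
    by (simp_all add: b_def)
qed

lemma b_pos: "0 < real b"
  using part_bounds by simp

lemma TK_edge_iff:
  "TK_edge n t i j \<longleftrightarrow> i < n \<and> j < n \<and> i \<noteq> j \<and>
    ((i < a \<and> a \<le> j \<and> j < m) \<or> (j < a \<and> a \<le> i \<and> i < m) \<or>
     ((i = 0 \<or> m \<le> i) \<and> (j = 0 \<or> m \<le> j)))"
  unfolding TK_edge_def Let_def m_def[symmetric] a_def[symmetric] by auto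

lemma TK_neighbourhood:
  assumes "i < n"
  shows "{j. j < n \<and> TK_edge n t i j} =
    (if i = 0 then {a..<n} else if i < a then {a..<m} else if i < m then {..<a}
     else insert 0 ({m..<n} - {i}))"
  using assms part_bounds by (auto simp: TK_edge_iff)

definition hub_weight :: "real \<Rightarrow> real" where
  "hub_weight \<mu> = \<mu>\<^sup>2 / b - (real a - 1)"

definition test_vector :: "real \<Rightarrow> nat \<Rightarrow> real" where
  "test_vector \<mu> j =
    (if j = 0 then hub_weight \<mu> else if j < a then 1 else if j < m then \<mu> / b
     else hub_weight \<mu> / (\<mu> - real t + 3))"

definition hub_excess :: "real \<Rightarrow> real" where
  "hub_excess \<mu> = \<mu> * hub_weight \<mu> - (\<mu> + (real t - 2) * hub_weight \<mu> / (\<mu> - real t + 3))"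

lemma row_sum_test_vector:
  assumes "i < n" and "\<mu> - real t + 3 \<noteq> 0"
  shows "(\<Sum>j<n. (if TK_edge n t i j then 1 else 0) * test_vector \<mu> j) =
    \<mu> * test_vector \<mu> i - (if i = 0 then hub_excess \<mu> else 0)"
proof -
  let ?v = "test_vector \<mu>" and ?z = "hub_weight \<mu> / (\<mu> - real t + 3)"
  have "sum ?v {a..<m} = sum (\<lambda>_. \<mu> / b) {a..<m}"
    using part_bounds by (intro sum.cong) (auto simp: test_vector_def)
  then have large: "sum ?v {a..<m} = \<mu>"
    using b_pos by (simp add: b_def)
  have clique: "?v j = ?z" if "m \<le> j" for j
    using that part_bounds by (simp add: test_vector_def)
  have "(\<Sum>j<n. (if TK_edge n t i j then 1 else 0) * ?v j) = sum ?v {j \<in> {..<n}. TK_edge n t i j}"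
    by (subst sum.inter_filter) (auto intro!: sum.cong)
  also have "\<dots> = \<mu> * ?v i - (if i = 0 then hub_excess \<mu> else 0)"
  proof (cases "i = 0")
    case True
    have "sum ?v {a..<n} = sum ?v {a..<m} + sum ?v {m..<n}"
      using part_bounds by (simp add: sum.atLeastLessThan_concat)
    also have "sum ?v {m..<n} = (real t - 2) * ?z"
      using clique part_bounds by (simp add: of_nat_diff)
    finally show ?thesis
      using True assms large by (simp add: TK_neighbourhood test_vector_def hub_excess_def)
  next
    case False
    consider "i < a" | "a \<le> i" "i < m" | "m \<le> i"
      by linarith
    then show ?thesis
    proof cases
      case 1
      then show ?thesis
        using False assms large by (simp add: TK_neighbourhood test_vector_def)
    next
      case 2
      have "sum ?v {..<a} = ?v 0 + sum ?v {1..<a}"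
        using part_bounds by (simp add: lessThan_atLeast0 sum.atLeast_Suc_lessThan)
      also have "sum ?v {1..<a} = real a - 1"
        using part_bounds by (simp add: test_vector_def of_nat_diff)
      finally show ?thesis
        using False 2 assms b_pos
        by (simp add: TK_neighbourhood test_vector_def hub_weight_def power2_eq_square)
    next
      case 3
      have "0 \<notin> {m..<n} - {i}"
        using part_bounds by simp
      then have "sum ?v (insert 0 ({m..<n} - {i})) = ?v 0 + sum ?v ({m..<n} - {i})"
        by simp
      also have "sum ?v ({m..<n} - {i}) = (real t - 3) * ?z"
        using 3 assms clique part_bounds by (simp add: of_nat_diff)
      also have "?v 0 = hub_weight \<mu>"
        by (simp add: test_vector_def)
      also have "hub_weight \<mu> + (real t - 3) * ?z = \<mu> * ?v i"
        using assms(2) clique[OF 3] by (simp add: field_simps)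
      finally show ?thesis
        using False 3 assms(1) part_bounds by (simp add: TK_neighbourhood)
    qed
  qed
  finally show ?thesis .
qed

lemma small_clique_if_n_large:
  assumes "10 * t \<le> n"
  shows "(real t - 2) * (real b + 1) \<le> real a * (real a - real t + 3)"
proof -
  have "m \<le> 2 * a + 1"
    by (simp add: a_def)
  then have a_large: "9 * real t + 1 \<le> 2 * real a"
    using assms unfolding m_def by linarith
  have t: "3 \<le> real t" and b: "real b \<le> real a + 1"
    using three_le_t part_bounds by simp_all
  have "(real t - 2) * (real b + 1) \<le> (real t - 2) * (real a + 2)"
    using t b by (intro mult_left_mono) auto
  also have "\<dots> \<le> real t * (real a + 2)"
    using t by (intro mult_right_mono) auto
  also have "\<dots> \<le> real a * (3 * real t)"
    using a_large t by (simp add: algebra_simps)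
  also have "\<dots> \<le> real a * (real a - real t + 3)"
    using a_large t by (intro mult_left_mono) auto
  finally show ?thesis .
qed

end

locale TK_graph_small_clique = TK_graph +
  assumes small_clique: "(real t - 2) * (real b + 1) \<le> real a * (real a - real t + 3)"
begin

lemma clique_lt_part: "real t - 3 < real a"
proof -
  have "0 < (real t - 2) * (real b + 1)"
    using three_le_t by simp
  then have "0 < real a * (real a - real t + 3)"
    using small_clique by linarith
  then show ?thesis
    by (simp add: zero_less_mult_iff)
qed

lemma part_le_sqrt: "real a \<le> sqrt (real a * real b)"
  using part_bounds by (simp add: real_le_rsqrt power2_eq_square)

lemma hub_excess_nonpos: "hub_excess (sqrt (real a * real b)) \<le> 0"
proof -
  let ?s = "sqrt (real a * real b)"
  have "hub_weight ?s = 1"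
    using b_pos part_bounds by (simp add: hub_weight_def)
  moreover have "0 < ?s - real t + 3"
    using clique_lt_part part_le_sqrt by linarith
  ultimately show ?thesis
    using three_le_t by (simp add: hub_excess_def)
qed

lemma hub_excess_nonneg: "0 \<le> hub_excess (sqrt (real a * real b + 1))"
proof -
  define c where "c = sqrt (real a * real b + 1)"
  have c_ge: "real a \<le> c"
    unfolding c_def by (rule order_trans[OF part_le_sqrt]) simp
  have d_pos: "0 < c - real t + 3"
    using clique_lt_part c_ge by linarith
  have "real a * (real a - real t + 3) \<le> c * (c - real t + 3)"
    using c_ge clique_lt_part by (intro mult_mono) auto
  then have key: "(real t - 2) * (real b + 1) \<le> c * (c - real t + 3)"
    using small_clique by linarith
  have weight: "hub_weight c = (real b + 1) / real b"
    using b_pos by (simp add: hub_weight_def c_def field_simps)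
  have "c * hub_weight c - c = c / real b"
    using b_pos unfolding weight by (simp add: field_simps)
  then have excess: "hub_excess c = c / real b - (real t - 2) * hub_weight c / (c - real t + 3)"
    unfolding hub_excess_def by simp
  have "(real t - 2) * hub_weight c = (real t - 2) * (real b + 1) / real b"
    unfolding weight by simp
  also have "\<dots> \<le> c * (c - real t + 3) / real b"
    using key b_pos by (simp add: divide_right_mono)
  finally have "(real t - 2) * hub_weight c \<le> c / real b * (c - real t + 3)"
    by simp
  then have "(real t - 2) * hub_weight c / (c - real t + 3) \<le> c / real b"
    using d_pos by (simp add: pos_divide_le_eq)
  then show ?thesis
    using excess unfolding c_def by simp
qed

lemma graph_lambda_le: "graph_lambda n (TK_edge n t) \<le> sqrt (real a * real b + 1)"
proof -
  define c where "c = sqrt (real a * real b + 1)"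
  have "real a \<le> c"
    unfolding c_def by (rule order_trans[OF part_le_sqrt]) simp
  then have c_gt: "real t - 3 < c"
    using clique_lt_part by linarith
  have weight: "0 < hub_weight c"
    using b_pos unfolding hub_weight_def c_def by (simp add: field_simps)
  show ?thesis
    unfolding graph_lambda_def adj_matrix_of_real c_def[symmetric]
  proof (rule spectral_radius_le_if_subinvariant[where x = "test_vector c"])
    show "0 < n"
      using part_bounds by simp
    show "0 < test_vector c i" for i
      using weight c_gt b_pos part_bounds by (simp add: test_vector_def)
    show "(\<Sum>j<n. (if TK_edge n t i j then 1 else 0) * test_vector c j) \<le> c * test_vector c i"
      if "i < n" for i
      using row_sum_test_vector[OF that, of c] c_gt hub_excess_nonneg unfolding c_def by simp
  qed simp
qed

lemma graph_lambda_ge: "sqrt (real a * real b) \<le> graph_lambda n (TK_edge n t)"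
proof -
  let ?s = "sqrt (real a * real b)" and ?c = "sqrt (real a * real b + 1)"
  have denom_nonzero: "\<mu> - real t + 3 \<noteq> 0" if "?s \<le> \<mu>" for \<mu>
    using that clique_lt_part part_le_sqrt by linarith
  have "continuous_on {?s..?c} hub_excess"
    unfolding hub_excess_def hub_weight_def using denom_nonzero b_pos by (intro continuous_intros) auto
  then obtain \<mu> where \<mu>: "?s \<le> \<mu>" "hub_excess \<mu> = 0"
    using IVT'[of hub_excess ?s 0 ?c] hub_excess_nonpos hub_excess_nonneg by auto
  have "0 < \<mu>"
    using \<mu>(1) part_le_sqrt part_bounds by linarith
  have "\<bar>\<mu>\<bar> \<le> graph_lambda n (TK_edge n t)"
    unfolding graph_lambda_def adj_matrix_of_real
  proof (rule abs_real_eigenvalue_le_spectral_radius[where u = "test_vector \<mu>" and p = a])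
    show "a < n" "test_vector \<mu> a \<noteq> 0"
      using part_bounds \<open>0 < \<mu>\<close> by (auto simp: test_vector_def)
    show "(\<Sum>j<n. (if TK_edge n t i j then 1 else 0) * test_vector \<mu> j) = \<mu> * test_vector \<mu> i"
      if "i < n" for i
      using row_sum_test_vector[OF that denom_nonzero[OF \<mu>(1)]] \<mu>(2) by simp
  qed
  then show ?thesis
    using \<mu>(1) by linarith
qed

end

lemma TK_graph_small_clique_if_n_large:
  assumes "3 \<le> t" and "10 * t \<le> n"
  shows "TK_graph_small_clique n t"
proof -
  interpret TK_graph n t
    using assms by unfold_locales linarith+
  show ?thesis
    by unfold_locales (rule small_clique_if_n_large[OF assms(2)])
qed

lemma mult_halves_gap:
  fixes p q :: nat
  assumes "p < q" and "4 \<le> q"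
  shows "p div 2 * (p - p div 2) + 1 < q div 2 * (q - q div 2)"
proof -
  have halves: "4 * (x div 2 * (x - x div 2)) + x mod 2 = x * x" for x :: nat
  proof (cases "even x")
    case True
    then show ?thesis by (auto simp: algebra_simps)
  next
    case False
    then obtain k where "x = 2 * k + 1"
      using oddE by blast
    then show ?thesis by simp
  qed
  have "p * p \<le> (q - 1) * (q - 1)"
    using assms by (intro mult_mono) auto
  moreover have "(q - 1) * (q - 1) + 2 * q = q * q + 1"
    using assms by (cases q) (auto simp: algebra_simps)
  moreover have "p mod 2 \<le> 1" "q mod 2 \<le> 1"
    by simp_all
  ultimately show ?thesis
    using halves[of p] halves[of q] assms by linarith
qed

theorem lemma2p8:
  fixes k n r s :: nat
  assumes "k \<ge> 1" and "n \<ge> 100 * k" and "3 \<le> r" and "r < s" and "s \<le> 10 * k"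
  shows "graph_lambda n (TK_edge n s) < graph_lambda n (TK_edge n r)"
proof -
  have "10 * s \<le> n" "10 * r \<le> n"
    using assms by linarith+
  interpret S: TK_graph_small_clique n s
    using assms \<open>10 * s \<le> n\<close> by (intro TK_graph_small_clique_if_n_large) auto
  interpret R: TK_graph_small_clique n r
    using assms \<open>10 * r \<le> n\<close> by (intro TK_graph_small_clique_if_n_large) auto
  have "S.a * S.b + 1 < R.a * R.b"
    unfolding S.b_def S.a_def S.m_def R.b_def R.a_def R.m_def
    using assms \<open>10 * s \<le> n\<close> by (intro mult_halves_gap) linarith+
  then have "real (S.a * S.b + 1) < real (R.a * R.b)"
    by (simp only: of_nat_less_iff)
  then have "sqrt (real S.a * real S.b + 1) < sqrt (real R.a * real R.b)"
    by simp
  then show ?thesis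
    using S.graph_lambda_le R.graph_lambda_ge by linarith
qed

end
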